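(* Let $\Omega$ be a finite search space, let $\mathcal{B}$ be a finite nonempty set of information resources, and let $t\subseteq\Omega$ be a fixed target set of size $k$ with indicator vector $\mathbf{t}\in\{0,1\}^{|\Omega|}$. Fix an algorithm $\mathcal{A}$ and let $\phi(t,f)$ be a decomposable probability-of-success metric for $\mathcal{A}$ on the search problem $(\Omega,t,f)$. For $q_{\min}\in(0,1]$ define $\mathcal{B}_{q_{\min}}=\{f\mid f\in\mathcal{B},\ \phi(t,f)\ge q_{\min}\}$. Then $$\frac{|\mathcal{B}_{q_{\min}}|}{|\mathcal{B}|}\le\frac{p+\mathrm{Bias}(\mathcal{B},\mathbf{t})}{q_{\min}},\qquad p=\frac{k}{|\Omega|}.$$
   Context: A probability-of-success metric $\phi$ assigns to each target set $t\subseteq\Omega$ and information resource $f$ a success probability $\phi(t,f)$. It is decomposable if for each $f$ there exists a probability vector $\mathbf{P}_{\phi,f}\in\mathbb{R}^{|\Omega|}$ (nonnegative entries summing to $1$), not a function of $t$, such that $\phi(t,f)=\mathbf{t}^\top\mathbf{P}_{\phi,f}$ for all $t$. For a distribution $\mathcal{D}$ over information resources with $F\sim\mathcal{D}$ and a $k$-hot target vector $\mathbf{t}$, $\mathrm{Bias}(\mathcal{D},\mathbf{t})=\mathbb{E}_{\mathcal{D}}[\mathbf{t}^\top\mathbf{P}_{\phi,F}]-\frac{k}{|\Omega|}$; $\mathrm{Bias}(\mathcal{B},\mathbf{t})$ denotes this quantity for $\mathcal{D}$ the uniform distribution on $\mathcal{B}$. *)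

theory Defs
  imports "HOL-Analysis.Analysis"
begin

definition prob_vector :: "'a set \<Rightarrow> ('a \<Rightarrow> real) \<Rightarrow> bool" where
  "prob_vector Omega P \<longleftrightarrow> (\<forall>w\<in>Omega. 0 \<le> P w) \<and> (\<Sum>w\<in>Omega. P w) = 1"

text \<open>For a target set t (subset of Omega), the inner product of its indicator vector with P.\<close>
definition target_dot :: "'a set \<Rightarrow> ('a \<Rightarrow> real) \<Rightarrow> real" where
  "target_dot t P = (\<Sum>w\<in>t. P w)"

definition decomposable :: "'a set \<Rightarrow> ('a set \<Rightarrow> 'f \<Rightarrow> real) \<Rightarrow> bool" where
  "decomposable Omega phi \<longleftrightarrow>
     (\<forall>f. \<exists>P. prob_vector Omega P \<and> (\<forall>t. t \<subseteq> Omega \<longrightarrow> phi t f = target_dot t P))"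

definition Pvec :: "'a set \<Rightarrow> ('a set \<Rightarrow> 'f \<Rightarrow> real) \<Rightarrow> 'f \<Rightarrow> ('a \<Rightarrow> real)" where
  "Pvec Omega phi f = (SOME P. prob_vector Omega P \<and> (\<forall>t. t \<subseteq> Omega \<longrightarrow> phi t f = target_dot t P))"

definition Bias :: "'a set \<Rightarrow> ('a set \<Rightarrow> 'f \<Rightarrow> real) \<Rightarrow> 'f set \<Rightarrow> 'a set \<Rightarrow> real" where
  "Bias Omega phi B t =
     (\<Sum>f\<in>B. target_dot t (Pvec Omega phi f)) / real (card B) - real (card t) / real (card Omega)"

end

theory Submission
  imports Defs
begin

(* Under decomposability phi t f = t^T P_f is nonnegative, and its mean over B is exactly
   k/|Omega| + Bias(B, t).  The bound is therefore Markov's inequality for the uniform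
   distribution on B. *)

lemma sum_ge_card_superlevel:
  fixes g :: "'b \<Rightarrow> real"
  assumes "finite B" and "\<And>x. x \<in> B \<Longrightarrow> 0 \<le> g x"
  shows "q * real (card {x \<in> B. q \<le> g x}) \<le> (\<Sum>x\<in>B. g x)"
proof -
  let ?S = "{x \<in> B. q \<le> g x}"
  have "q * real (card ?S) = (\<Sum>x\<in>?S. q)" by simp
  also have "\<dots> \<le> (\<Sum>x\<in>?S. g x)" by (rule sum_mono) simp
  also have "\<dots> \<le> (\<Sum>x\<in>B. g x)" by (rule sum_mono2) (use assms in auto)
  finally show ?thesis .
qed

lemma card_superlevel_ratio_le_mean:
  fixes g :: "'b \<Rightarrow> real"
  assumes "finite B" and "B \<noteq> {}" and "0 < q" and "\<And>x. x \<in> B \<Longrightarrow> 0 \<le> g x"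
  shows "real (card {x \<in> B. q \<le> g x}) / real (card B) \<le> ((\<Sum>x\<in>B. g x) / real (card B)) / q"
proof -
  have "0 < real (card B)" using assms(1,2) by (simp add: card_gt_0_iff)
  with sum_ge_card_superlevel[of B g q] assms show ?thesis
    by (simp add: field_simps)
qed

lemma Pvec_spec:
  assumes "decomposable Omega phi"
  shows "prob_vector Omega (Pvec Omega phi f)"
    and "t \<subseteq> Omega \<Longrightarrow> phi t f = target_dot t (Pvec Omega phi f)"
proof -
  let ?spec = "\<lambda>P. prob_vector Omega P \<and> (\<forall>t. t \<subseteq> Omega \<longrightarrow> phi t f = target_dot t P)"
  obtain P where "?spec P"
    using assms unfolding decomposable_def by blast
  then have "?spec (Pvec Omega phi f)"
    unfolding Pvec_def by (rule someI[where P = ?spec])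
  then show "prob_vector Omega (Pvec Omega phi f)"
    and "t \<subseteq> Omega \<Longrightarrow> phi t f = target_dot t (Pvec Omega phi f)"
    by blast+
qed

lemma decomposable_nonneg:
  assumes "decomposable Omega phi" and "t \<subseteq> Omega"
  shows "0 \<le> phi t f"
  using Pvec_spec(1)[OF assms(1), of f] Pvec_spec(2)[OF assms, of f] assms(2)
  unfolding prob_vector_def target_dot_def by (simp add: subset_iff sum_nonneg)

lemma Bias_eq_mean_success:
  assumes "decomposable Omega phi" and "t \<subseteq> Omega"
  shows "real (card t) / real (card Omega) + Bias Omega phi B t = (\<Sum>f\<in>B. phi t f) / real (card B)"
  unfolding Bias_def using Pvec_spec(2)[OF assms] by simp

theorem theorem6:
  fixes Omega :: "'a set" and B :: "'f set" and t :: "'a set"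
    and phi :: "'a set \<Rightarrow> 'f \<Rightarrow> real" and qmin :: real
  assumes "finite Omega" and "Omega \<noteq> {}"
    and "finite B" and "B \<noteq> {}"
    and "t \<subseteq> Omega"
    and "decomposable Omega phi"
    and "0 < qmin" and "qmin \<le> 1"
  shows "real (card {f \<in> B. phi t f \<ge> qmin}) / real (card B)
           \<le> (real (card t) / real (card Omega) + Bias Omega phi B t) / qmin"
  unfolding Bias_eq_mean_success[OF assms(6,5)]
  by (rule card_superlevel_ratio_le_mean)
     (use assms decomposable_nonneg[OF assms(6,5)] in auto)

end
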